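(* Let $\mathbf w=(w_1,\dots,w_n)$ be weights with $w_i\ge0$, $\sum_iw_i=1$, and suppose $w_i=s_i/d$ with $s_i\in\mathbb Z_{\ge0}$ and $d\in\mathbb Z_{>0}$. Then for all $\mathbf r=(r_1,\dots,r_n)\in[0,1]^n$, $$\mu_{\mathbf w}(\mathbf r)=\operatorname{median}\big(\underbrace{r_1,\dots,r_1}_{s_1},\dots,\underbrace{r_n,\dots,r_n}_{s_n},0,\tfrac1d,\tfrac2d,\dots,1-\tfrac1d,1\big),$$ where $\mu_{\mathbf w}(\mathbf r):=\sup\{y\in[0,1]:\sum_{i:\,r_i\ge y}w_i\ge y\}$.
   Context: The median of an odd number $2d+1$ of real numbers (here $\sum_i s_i=d$ entries from $\mathbf r$ plus the $d+1$ grid points) is its $(d+1)$-th smallest element. *)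

theory Defs
  imports Complex_Main
begin

definition mu_w :: "nat \<Rightarrow> (nat \<Rightarrow> real) \<Rightarrow> (nat \<Rightarrow> real) \<Rightarrow> real" where
  "mu_w n w r = Sup {y \<in> {0..1}. (\<Sum>i\<in>{i. i < n \<and> r i \<ge> y}. w i) \<ge> y}"

definition median :: "real list \<Rightarrow> real" where
  "median xs = sort xs ! (length xs div 2)"

end

theory Submission
  imports Defs
begin

text \<open>Put F(t) = sum of the w i with r i \<ge> t, so that mu_w is the largest y in [0,1] with
  y \<le> F(y). A number t is at most the median of a list of length 2d+1 iff at least d+1 entries
  are \<ge> t. In the list at hand d F(t) entries come from r and d + 1 - \<lceil>d t\<rceil> are grid
  points, so this count condition reads \<lceil>d t\<rceil> \<le> d F(t), i.e. t \<le> F(t). Hence the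
  median itself lies in the set defining mu_w and bounds it from above.\<close>

lemma le_sort_nth_iff:
  fixes xs :: "'a::linorder list"
  assumes "k < length xs"
  shows "t \<le> sort xs ! k \<longleftrightarrow> length xs - k \<le> length (filter (\<lambda>x. t \<le> x) xs)"
proof -
  define ys where "ys = sort xs"
  define J where "J = {j. j < length xs \<and> t \<le> ys ! j}"
  have sorted: "sorted ys" and len: "length ys = length xs" by (simp_all add: ys_def)
  have "length (filter (\<lambda>x. t \<le> x) xs) = length (filter (\<lambda>x. t \<le> x) ys)"
    by (simp add: ys_def filter_sort)
  then have count: "length (filter (\<lambda>x. t \<le> x) xs) = card J"
    by (simp add: J_def len length_filter_conv_card)
  show ?thesis
  proof
    assume "t \<le> sort xs ! k"
    moreover have "ys ! k \<le> ys ! j" if "j \<in> {k..<length xs}" for j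
      using sorted len that by (auto intro: sorted_nth_mono)
    ultimately have "{k..<length xs} \<subseteq> J" by (force simp: J_def ys_def)
    then show "length xs - k \<le> length (filter (\<lambda>x. t \<le> x) xs)"
      using card_mono[of J "{k..<length xs}"] by (simp add: count J_def)
  next
    assume ge: "length xs - k \<le> length (filter (\<lambda>x. t \<le> x) xs)"
    show "t \<le> sort xs ! k"
    proof (rule ccontr)
      assume "\<not> t \<le> sort xs ! k"
      moreover have "ys ! j \<le> ys ! k" if "j \<le> k" for j
        using sorted len that assms by (auto intro: sorted_nth_mono)
      ultimately have "J \<subseteq> {Suc k..<length xs}"
        by (auto simp: J_def ys_def not_less_eq_eq intro: order_trans)
      then have "card J \<le> length xs - Suc k" using card_mono[of "{Suc k..<length xs}" J] by simp
      then show False using ge assms by (simp add: count)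
    qed
  qed
qed

lemma le_median_iff:
  assumes "length xs = 2 * m + 1"
  shows "t \<le> median xs \<longleftrightarrow> m + 1 \<le> length (filter (\<lambda>x. t \<le> x) xs)"
  using le_sort_nth_iff[of "m" xs t] assms by (simp add: median_def)

lemma median_in_set:
  assumes "xs \<noteq> []"
  shows "median xs \<in> set xs"
proof -
  have "length xs div 2 < length (sort xs)" using assms by simp
  then show ?thesis unfolding median_def by (metis nth_mem set_sort)
qed

lemma length_filter_concat_replicate:
  "length (filter P (concat (map (\<lambda>i. replicate (s i) (r i)) [0..<n])))
     = (\<Sum>i<n. if P (r i) then s i else 0)"
  by (simp add: filter_concat length_concat o_def filter_replicate atLeast0LessThan[symmetric]
      sum_set_upt_conv_sum_list_nat[symmetric] if_distrib[of length] cong: if_cong)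

lemma length_filter_ge_grid:
  assumes "d > 0"
  shows "length (filter (\<lambda>x. t \<le> x) (map (\<lambda>k. real k / real d) [0..<d+1]))
           = d + 1 - nat \<lceil>t * d\<rceil>"
proof -
  have "t \<le> real k / real d \<longleftrightarrow> nat \<lceil>t * d\<rceil> \<le> k" for k
  proof -
    have "t \<le> real k / real d \<longleftrightarrow> t * d \<le> real k" using assms by (simp add: field_simps)
    also have "\<dots> \<longleftrightarrow> \<lceil>t * d\<rceil> \<le> int k" by (simp add: ceiling_le_iff)
    also have "\<dots> \<longleftrightarrow> nat \<lceil>t * d\<rceil> \<le> k" by linarith
    finally show ?thesis .
  qed
  then have "{k. k < d + 1 \<and> t \<le> real k / real d} = {nat \<lceil>t * d\<rceil>..<d + 1}"
    unfolding set_eq_iff atLeastLessThan_iff mem_Collect_eq by auto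
  moreover have "length (filter (\<lambda>x. t \<le> x) (map (\<lambda>k. real k / real d) [0..<d+1]))
      = card {k. k < d + 1 \<and> t \<le> real k / real d}"
    unfolding filter_map length_map o_def
    by (subst length_filter_conv_card, intro arg_cong[where f=card] Collect_cong conj_cong,
        simp_all del: upt_Suc)
  ultimately show ?thesis by simp
qed

lemma Sup_eq_of_threshold_iff:
  fixes F :: "real \<Rightarrow> real"
  assumes "m \<in> {0..1}" and "\<And>t. t \<in> {0..1} \<Longrightarrow> t \<le> m \<longleftrightarrow> t \<le> F t"
  shows "Sup {y \<in> {0..1}. F y \<ge> y} = m"
  using assms(1) assms(2)[of m] assms(2) by (intro cSup_eq_maximum) auto

lemma sum_weights_eq_denominator:
  fixes w :: "nat \<Rightarrow> real"
  assumes "(\<Sum>i<n. w i) = 1" and "d > 0" and "\<And>i. i < n \<Longrightarrow> w i = real (s i) / real d"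
  shows "(\<Sum>i<n. s i) = d"
proof -
  have "(\<Sum>i<n. real (s i)) / real d = 1"
    using assms(1,3) by (simp add: sum_divide_distrib)
  then show ?thesis using assms(2) by (simp flip: of_nat_sum)
qed

lemma superlevel_weight_eq:
  fixes w :: "nat \<Rightarrow> real"
  assumes "\<And>i. i < n \<Longrightarrow> w i = real (s i) / real d"
  shows "(\<Sum>i\<in>{i. i < n \<and> r i \<ge> t}. w i) = real (\<Sum>i<n. if t \<le> r i then s i else 0) / real d"
proof -
  have "(\<Sum>i\<in>{i. i < n \<and> r i \<ge> t}. w i) = (\<Sum>i<n. if t \<le> r i then w i else 0)"
    by (simp add: sum.inter_filter[symmetric] lessThan_def conj_commute)
  also have "\<dots> = (\<Sum>i<n. (if t \<le> r i then real (s i) else 0) / real d)"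
    by (intro sum.cong) (auto simp: assms)
  also have "\<dots> = real (\<Sum>i<n. if t \<le> r i then s i else 0) / real d"
    by (simp add: sum_divide_distrib[symmetric] of_nat_sum if_distrib[of real] cong: if_cong)
  finally show ?thesis .
qed

lemma le_median_weighted_grid_iff:
  fixes w :: "nat \<Rightarrow> real"
  assumes "(\<Sum>i<n. w i) = 1" and "d > 0" and "\<And>i. i < n \<Longrightarrow> w i = real (s i) / real d"
    and "t \<in> {0..1}"
  shows "t \<le> median (concat (map (\<lambda>i. replicate (s i) (r i)) [0..<n])
                    @ map (\<lambda>k. real k / real d) [0..<d+1])
         \<longleftrightarrow> t \<le> (\<Sum>i\<in>{i. i < n \<and> r i \<ge> t}. w i)"
    (is "t \<le> median (?A @ ?B) \<longleftrightarrow> _")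
proof -
  define c where "c = (\<Sum>i<n. if t \<le> r i then s i else 0)"
  have "length ?A = d"
    using length_filter_concat_replicate[of "\<lambda>_. True" s r n]
      sum_weights_eq_denominator[OF assms(1-3)] by simp
  then have len: "length (?A @ ?B) = 2 * d + 1" by simp
  have "\<lceil>t * d\<rceil> \<le> int d"
    using assms(4) by (simp add: ceiling_le_iff mult_left_le_one_le)
  moreover have "length (filter (\<lambda>x. t \<le> x) (?A @ ?B)) = c + (d + 1 - nat \<lceil>t * d\<rceil>)"
    unfolding filter_append length_append length_filter_concat_replicate
      length_filter_ge_grid[OF assms(2)] c_def ..
  ultimately have "t \<le> median (?A @ ?B) \<longleftrightarrow> \<lceil>t * d\<rceil> \<le> int c"
    unfolding le_median_iff[OF len] by linarith
  also have "\<dots> \<longleftrightarrow> t \<le> real c / real d"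
    using assms(2) by (simp add: ceiling_le_iff le_divide_eq)
  finally show ?thesis by (simp add: superlevel_weight_eq[OF assms(3)] c_def)
qed

theorem mainTheorem11:
  fixes n :: nat and w r :: "nat \<Rightarrow> real" and s :: "nat \<Rightarrow> nat" and d :: nat
  assumes "\<And>i. i < n \<Longrightarrow> w i \<ge> 0"
    and "(\<Sum>i<n. w i) = 1"
    and "d > 0"
    and "\<And>i. i < n \<Longrightarrow> w i = real (s i) / real d"
    and "\<And>i. i < n \<Longrightarrow> r i \<in> {0..1}"
  shows "mu_w n w r =
    median (concat (map (\<lambda>i. replicate (s i) (r i)) [0..<n])
            @ map (\<lambda>k. real k / real d) [0..<d+1])"
proof -
  let ?xs = "concat (map (\<lambda>i. replicate (s i) (r i)) [0..<n])
             @ map (\<lambda>k. real k / real d) [0..<d+1]"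
  have "median ?xs \<in> set ?xs" by (intro median_in_set) simp
  then have "median ?xs \<in> {0..1}" using assms(3,5) by auto
  then show ?thesis
    unfolding mu_w_def
    using le_median_weighted_grid_iff[OF assms(2-4)] by (rule Sup_eq_of_threshold_iff)
qed

end
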